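(* There exists a polynomial $p$ such that for every sufficiently large natural number $n$ the following holds. Let $\alpha$ be an integer with $\alpha > 7 \log n + 6$, and let $(x_1, \ldots, x_t)$ be a tuple of strings in $\{0,1\}^n$ that is mutually $\alpha$-independent, i.e. $C(x_{\pi(1)} x_{\pi(2)} \cdots x_{\pi(t)}) \geq C(x_1) + \cdots + C(x_t) - \alpha$ for every permutation $\pi$ of $\{1,\ldots,t\}$. Then $t \leq p(n)\, 2^{\alpha}$.
   Context: $C(x)$ denotes the plain Kolmogorov complexity of the binary string $x$ with respect to a fixed universal Turing machine; juxtaposition of strings denotes concatenation. Logarithms are base $2$. *)

theory Defs
  imports Complex_Main "HOL-Computational_Algebra.Polynomial"
begin

datatype recf = Z | S | Proj nat | Comp recf "recf list" | Prec recf recf | Mn recf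

inductive eval :: "recf \<Rightarrow> nat list \<Rightarrow> nat \<Rightarrow> bool" where
  eval_Z: "eval Z xs 0"
| eval_S: "eval S (x # xs) (Suc x)"
| eval_Proj: "i < length xs \<Longrightarrow> eval (Proj i) xs (xs ! i)"
| eval_Comp: "list_all2 (\<lambda>g y. eval g xs y) gs ys \<Longrightarrow> eval f ys z \<Longrightarrow> eval (Comp f gs) xs z"
| eval_Prec0: "eval f xs y \<Longrightarrow> eval (Prec f g) (0 # xs) y"
| eval_PrecS: "eval (Prec f g) (n # xs) r \<Longrightarrow> eval g (n # r # xs) y \<Longrightarrow> eval (Prec f g) (Suc n # xs) y"
| eval_Mn: "eval f (y # xs) 0 \<Longrightarrow> (\<forall>z<y. \<exists>w. eval f (z # xs) (Suc w)) \<Longrightarrow> eval (Mn f) xs y"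

fun enc :: "bool list \<Rightarrow> nat" where
  "enc [] = 0"
| "enc (b # bs) = 2 * enc bs + (if b then 2 else 1)"

definition partial_computable :: "(bool list \<Rightarrow> bool list option) \<Rightarrow> bool" where
  "partial_computable F \<longleftrightarrow> (\<exists>f. \<forall>x y. F x = Some y \<longleftrightarrow> eval f [enc x] (enc y))"

definition universal :: "(bool list \<Rightarrow> bool list option) \<Rightarrow> bool" where
  "universal U \<longleftrightarrow> partial_computable U \<and>
     (\<forall>F. partial_computable F \<longrightarrow> (\<exists>q. \<forall>p. U (q @ p) = F p))"

definition KC :: "(bool list \<Rightarrow> bool list option) \<Rightarrow> bool list \<Rightarrow> nat" where
  "KC U x = (LEAST k. \<exists>p. length p = k \<and> U p = Some x)"

definition mutually_independent ::
  "(bool list \<Rightarrow> bool list option) \<Rightarrow> int \<Rightarrow> bool list list \<Rightarrow> bool" where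
  "mutually_independent U \<alpha> xs \<longleftrightarrow>
     (\<forall>\<pi>. bij_betw \<pi> {..<length xs} {..<length xs} \<longrightarrow>
        int (KC U (concat (map (\<lambda>i. xs ! \<pi> i) [0..<length xs])))
          \<ge> (\<Sum>i<length xs. int (KC U (xs ! i))) - \<alpha>)"

end

theory Submission
  imports Defs "HOL-Library.Nat_Bijection"
begin

text \<open>Order the strings so that their shortest programs have nondecreasing keys
  \<open>4 |p| + (first two bits of p)\<close>. The concatenation is then produced by a fixed decoder
  from the following description: for every program, the increment of its key in unary,
  followed by the program without its first two bits. The keys are bounded by \<open>4n + O(1)\<close>,
  so the description has length at most \<open>\<Sum> C(x\<^sub>i) - t + 4n + O(1)\<close>: every string saves
  one bit. Mutual \<open>\<alpha>\<close>-independence of the tuple therefore forces \<open>t \<le> \<alpha> + 4n + O(1)\<close>,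
  which is much stronger than \<open>t \<le> p(n) 2\<^sup>\<alpha>\<close>.\<close>

inductive_cases eval_ZE: "eval Z xs y"
inductive_cases eval_SE: "eval S xs y"
inductive_cases eval_ProjE: "eval (Proj i) xs y"
inductive_cases eval_CompE: "eval (Comp f gs) xs y"
inductive_cases eval_PrecE: "eval (Prec f g) xs y"
inductive_cases eval_MnE: "eval (Mn f) xs y"

lemma list_all2_eval_unique:
  "list_all2 (\<lambda>g y. eval g xs y \<and> (\<forall>y'. eval g xs y' \<longrightarrow> y = y')) gs ys
   \<Longrightarrow> list_all2 (\<lambda>g y. eval g xs y) gs ys' \<Longrightarrow> ys = ys'"
proof (induction gs ys arbitrary: ys' rule: list_all2_induct)
  case Nil
  then show ?case by simp
next
  case (Cons g gs y ys)
  then obtain y' ys'' where "ys' = y' # ys''" "eval g xs y'"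
      "list_all2 (\<lambda>g y. eval g xs y) gs ys''"
    by (auto simp: list_all2_Cons1)
  with Cons show ?case by auto
qed

lemma eval_deterministic: "eval f xs y \<Longrightarrow> eval f xs y' \<Longrightarrow> y = y'"
proof (induction arbitrary: y' rule: eval.induct)
  case (eval_Comp xs gs ys f z)
  from eval_Comp.prems obtain ys' where
    ys': "list_all2 (\<lambda>g y. eval g xs y) gs ys'" "eval f ys' y'"
    by (rule eval_CompE) blast
  have "list_all2 (\<lambda>g y. eval g xs y \<and> (\<forall>y'. eval g xs y' \<longrightarrow> y = y')) gs ys"
    using eval_Comp.IH(1) by (rule list_all2_mono) blast
  then have "ys = ys'" using ys'(1) by (rule list_all2_eval_unique)
  with eval_Comp.IH(2) ys'(2) show ?case by blast
next
  case (eval_Prec0 f xs y g)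
  from eval_Prec0.prems show ?case
    by (rule eval_PrecE) (use eval_Prec0.IH in blast)+
next
  case (eval_PrecS f g n xs r y)
  from eval_PrecS.prems obtain r' where
    "eval (Prec f g) (n # xs) r'" "eval g (n # r' # xs) y'"
    by (rule eval_PrecE) blast+
  with eval_PrecS.IH show ?case by metis
next
  case (eval_Mn f y xs)
  from eval_Mn.prems have y': "eval f (y' # xs) 0" "\<forall>z<y'. \<exists>w. eval f (z # xs) (Suc w)"
    by (auto elim: eval_MnE)
  show ?case
  proof (rule linorder_cases[of y y'])
    assume "y < y'"
    with y' eval_Mn.IH(1) show ?thesis by blast
  next
    assume "y' < y"
    with eval_Mn.IH(2) obtain w where
      "eval f (y' # xs) (Suc w)" "\<forall>v. eval f (y' # xs) v \<longrightarrow> Suc w = v"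
      by blast
    with y' show ?thesis by blast
  qed
qed (auto elim: eval_ZE eval_SE eval_ProjE)

lemma eval_Proj_nth: "i < length xs \<Longrightarrow> v = xs ! i \<Longrightarrow> eval (Proj i) xs v"
  using eval_Proj by simp

lemma eval_Comp1: "eval g xs a \<Longrightarrow> eval f [a] z \<Longrightarrow> eval (Comp f [g]) xs z"
  by (rule eval_Comp[of xs "[g]" "[a]"]) auto

lemma eval_Comp2:
  "eval g xs a \<Longrightarrow> eval h xs b \<Longrightarrow> eval f [a, b] z \<Longrightarrow> eval (Comp f [g, h]) xs z"
  by (rule eval_Comp[of xs "[g, h]" "[a, b]"]) auto

lemma eval_Comp3:
  "eval g xs a \<Longrightarrow> eval h xs b \<Longrightarrow> eval k xs c \<Longrightarrow> eval f [a, b, c] z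
   \<Longrightarrow> eval (Comp f [g, h, k]) xs z"
  by (rule eval_Comp[of xs "[g, h, k]" "[a, b, c]"]) auto

lemma eval_Prec_iterate:
  assumes "eval f xs (h 0)" and "\<And>n. eval g (n # h n # xs) (h (Suc n))"
  shows "eval (Prec f g) (n # xs) (h n)"
  by (induction n) (auto intro: eval_Prec0 eval_PrecS assms)

lemma eval_value_cong: "eval f xs y \<Longrightarrow> y = y' \<Longrightarrow> eval f xs y'"
  by simp

fun dec :: "nat \<Rightarrow> bool list" where
  "dec n = (if n = 0 then [] else (n mod 2 = 0) # dec ((n - 1) div 2))"

declare dec.simps[simp del]

lemma dec_0 [simp]: "dec 0 = []"
  by (simp add: dec.simps)

lemma dec_pos: "n > 0 \<Longrightarrow> dec n = (n mod 2 = 0) # dec ((n - 1) div 2)"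
  by (subst dec.simps) simp

lemma dec_enc [simp]: "dec (enc x) = x"
  by (induction x) (auto simp: dec_pos)

lemma enc_dec [simp]: "enc (dec n) = n"
proof (induction n rule: less_induct)
  case (less n)
  show ?case
  proof (cases "n = 0")
    case False
    then have "enc (dec ((n - 1) div 2)) = (n - 1) div 2" using less by auto
    with False show ?thesis by (subst dec_pos) (auto, presburger+)
  qed simp
qed

lemma enc_append: "enc (a @ b) = enc a + 2 ^ length a * enc b"
  by (induction a) auto

lemma enc_bounds: "2 ^ length x \<le> Suc (enc x) \<and> Suc (enc x) < 2 ^ Suc (length x)"
  by (induction x) auto

lemma length_le_enc: "length x \<le> enc x"
  using enc_bounds[of x] less_exp[of "length x"] by linarith

section \<open>Primitive recursive arithmetic\<close>

fun rec_const :: "nat \<Rightarrow> recf" where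
  "rec_const 0 = Z"
| "rec_const (Suc c) = Comp S [rec_const c]"

declare rec_const.simps [simp del]

lemma eval_rec_const: "eval (rec_const c) xs c"
  by (induction c) (auto simp: rec_const.simps intro: eval_Comp1 eval_Z eval_S)

definition rec_add :: recf where
  "rec_add = Prec (Proj 0) (Comp S [Proj 1])"

lemma eval_rec_add: "eval rec_add [a, b] (a + b)"
  unfolding rec_add_def
  by (rule eval_Prec_iterate[where h = "\<lambda>a. a + b"])
    (auto intro!: eval_Proj_nth eval_Comp1[OF _ eval_S])

definition rec_mul :: recf where
  "rec_mul = Prec Z (Comp rec_add [Proj 1, Proj 2])"

lemma eval_rec_mul: "eval rec_mul [a, b] (a * b)"
  unfolding rec_mul_def
  by (rule eval_Prec_iterate[where h = "\<lambda>a. a * b"])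
    (auto intro!: eval_Z eval_value_cong[OF eval_Comp2[OF _ _ eval_rec_add]] eval_Proj_nth)

definition rec_predecessor :: recf where
  "rec_predecessor = Prec Z (Proj 0)"

lemma eval_rec_predecessor: "eval rec_predecessor [a] (a - 1)"
  unfolding rec_predecessor_def
  by (rule eval_Prec_iterate[where h = "\<lambda>a. a - 1"]) (auto intro!: eval_Z eval_Proj_nth)

definition rec_sub_from :: recf where
  "rec_sub_from = Prec (Proj 0) (Comp rec_predecessor [Proj 1])"

lemma eval_rec_sub_from: "eval rec_sub_from [b, a] (a - b)"
  unfolding rec_sub_from_def
  by (rule eval_Prec_iterate[where h = "\<lambda>b. a - b"])
    (auto intro!: eval_value_cong[OF eval_Comp1[OF _ eval_rec_predecessor]] eval_Proj_nth)

definition rec_sub :: recf where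
  "rec_sub = Comp rec_sub_from [Proj 1, Proj 0]"

lemma eval_rec_sub: "eval rec_sub [a, b] (a - b)"
  unfolding rec_sub_def by (rule eval_Comp2) (auto intro: eval_Proj_nth eval_rec_sub_from)

definition rec_mod2 :: recf where
  "rec_mod2 = Prec Z (Comp rec_sub [rec_const 1, Proj 1])"

lemma eval_rec_mod2: "eval rec_mod2 [a] (a mod 2)"
  unfolding rec_mod2_def
  by (rule eval_Prec_iterate[where h = "\<lambda>a. a mod 2"])
    (auto intro!: eval_Z eval_value_cong[OF eval_Comp2[OF eval_rec_const _ eval_rec_sub]] eval_Proj_nth,
      presburger)

definition rec_div2 :: recf where
  "rec_div2 = Prec Z (Comp rec_add [Proj 1, Comp rec_mod2 [Proj 0]])"

lemma eval_rec_div2: "eval rec_div2 [a] (a div 2)"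
  unfolding rec_div2_def
  by (rule eval_Prec_iterate[where h = "\<lambda>a. a div 2"])
    (auto intro!: eval_Z eval_value_cong[OF eval_Comp2[OF _ eval_Comp1[OF _ eval_rec_mod2] eval_rec_add]]
      eval_Proj_nth, presburger)

definition rec_not :: "recf \<Rightarrow> recf" where
  "rec_not g = Comp rec_sub [rec_const 1, g]"

lemma eval_rec_not: "eval g xs v \<Longrightarrow> eval (rec_not g) xs (1 - v)"
  unfolding rec_not_def by (auto intro!: eval_Comp2 eval_rec_const eval_rec_sub)

definition rec_if :: recf where
  "rec_if = Comp rec_add
     [Comp rec_mul [rec_not (rec_not (Proj 0)), Proj 1], Comp rec_mul [rec_not (Proj 0), Proj 2]]"

lemma eval_rec_if: "eval rec_if [a, b, c] (if a \<noteq> 0 then b else c)"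
proof -
  have "(if a \<noteq> 0 then b else c) = (1 - (1 - a)) * b + (1 - a) * c" by auto
  then show ?thesis unfolding rec_if_def
    by (auto intro!: eval_Comp2 eval_rec_not eval_Proj_nth eval_rec_add eval_rec_mul)
qed

definition rec_le :: recf where
  "rec_le = rec_not (Comp rec_sub [Proj 0, Proj 1])"

lemma eval_rec_le: "eval rec_le [a, b] (of_bool (a \<le> b))"
  unfolding rec_le_def
  by (rule eval_value_cong[OF eval_rec_not[OF eval_Comp2[OF _ _ eval_rec_sub]]])
    (auto intro: eval_Proj_nth)

definition rec_pow2 :: recf where
  "rec_pow2 = Prec (rec_const 1) (Comp rec_add [Proj 1, Proj 1])"

lemma eval_rec_pow2: "eval rec_pow2 [n] (2 ^ n)"
  unfolding rec_pow2_def
  by (rule eval_Prec_iterate[where h = "\<lambda>n. 2 ^ n"])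
    (auto intro!: eval_rec_const eval_value_cong[OF eval_Comp2[OF _ _ eval_rec_add]] eval_Proj_nth)

definition rec_triangle :: recf where
  "rec_triangle = Prec Z (Comp rec_add [Proj 1, Comp S [Proj 0]])"

lemma eval_rec_triangle: "eval rec_triangle [a] (triangle a)"
  unfolding rec_triangle_def
  by (rule eval_Prec_iterate[where h = triangle])
    (auto intro!: eval_Z eval_value_cong[OF eval_Comp2[OF _ eval_Comp1[OF _ eval_S] eval_rec_add]]
      eval_Proj_nth)

fun tri_count :: "nat \<Rightarrow> nat \<Rightarrow> nat" where
  "tri_count 0 z = 0"
| "tri_count (Suc k) z = tri_count k z + of_bool (triangle (Suc k) \<le> z)"

lemma triangle_le_iff: "triangle a \<le> triangle b \<longleftrightarrow> a \<le> b"
  by (rule strict_mono_less_eq) (simp add: strict_mono_Suc_iff)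

lemma le_triangle: "m \<le> triangle m"
  by (induction m) auto

lemma tri_count_eq_min:
  assumes "triangle m \<le> z" "z < triangle (Suc m)"
  shows "tri_count k z = min k m"
proof (induction k)
  case (Suc k)
  have "triangle (Suc k) \<le> z \<longleftrightarrow> Suc k \<le> m"
    using assms triangle_le_iff[of "Suc k" m] triangle_le_iff[of "Suc m" "Suc k"] by linarith
  with Suc show ?case by auto
qed simp

lemma tri_count_prod_encode: "tri_count (prod_encode (a, b)) (prod_encode (a, b)) = a + b"
proof -
  let ?z = "prod_encode (a, b)"
  have "triangle (a + b) \<le> ?z" "?z < triangle (Suc (a + b))"
    by (auto simp: prod_encode_def)
  with le_triangle[of "a + b"] show ?thesis by (simp add: tri_count_eq_min)
qed

lemma fst_prod_decode_eq: "fst (prod_decode z) = z - triangle (tri_count z z)"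
proof -
  obtain a b where "z = prod_encode (a, b)" by (metis prod_decode_inverse surj_pair)
  then show ?thesis by (simp add: tri_count_prod_encode) (simp add: prod_encode_def)
qed

lemma snd_prod_decode_eq: "snd (prod_decode z) = tri_count z z - fst (prod_decode z)"
proof -
  obtain a b where "z = prod_encode (a, b)" by (metis prod_decode_inverse surj_pair)
  then show ?thesis by (simp add: tri_count_prod_encode)
qed

fun pow2_count :: "nat \<Rightarrow> nat \<Rightarrow> nat" where
  "pow2_count 0 z = 0"
| "pow2_count (Suc k) z = pow2_count k z + of_bool (2 ^ Suc k \<le> Suc z)"

lemma pow2_count_eq_min:
  assumes "2 ^ l \<le> Suc z" "Suc z < 2 ^ Suc l"
  shows "pow2_count k z = min k l"
proof (induction k)
  case (Suc k)
  have "2 ^ Suc k \<le> Suc z \<longleftrightarrow> Suc k \<le> l"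
  proof
    assume "2 ^ Suc k \<le> Suc z"
    then have "(2::nat) ^ Suc k < 2 ^ Suc l" using assms by linarith
    then show "Suc k \<le> l" by simp
  next
    assume "Suc k \<le> l"
    then have "(2::nat) ^ Suc k \<le> 2 ^ l" by (rule power_increasing) simp
    with assms show "2 ^ Suc k \<le> Suc z" by linarith
  qed
  with Suc show ?case by auto
qed simp

lemma pow2_count_enc: "pow2_count (enc x) (enc x) = length x"
  using pow2_count_eq_min[of "length x" "enc x" "enc x"] enc_bounds[of x] length_le_enc[of x]
  by simp

definition rec_tri_count :: recf where
  "rec_tri_count =
     Prec Z (Comp rec_add [Proj 1, Comp rec_le [Comp rec_triangle [Comp S [Proj 0]], Proj 2]])"

lemma eval_rec_tri_count: "eval rec_tri_count [k, z] (tri_count k z)"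
  unfolding rec_tri_count_def
  by (rule eval_Prec_iterate[where h = "\<lambda>k. tri_count k z"]) (auto intro!: eval_Z
      eval_value_cong[OF eval_Comp2[OF _ eval_Comp2[OF eval_Comp1[OF eval_Comp1[OF _ eval_S]
        eval_rec_triangle] _ eval_rec_le] eval_rec_add]] eval_Proj_nth)

definition rec_tri_root :: recf where
  "rec_tri_root = Comp rec_tri_count [Proj 0, Proj 0]"

definition rec_fst :: recf where
  "rec_fst = Comp rec_sub [Proj 0, Comp rec_triangle [rec_tri_root]]"

definition rec_snd :: recf where
  "rec_snd = Comp rec_sub [rec_tri_root, rec_fst]"

definition rec_pair :: recf where
  "rec_pair = Comp rec_add [Comp rec_triangle [Comp rec_add [Proj 0, Proj 1]], Proj 0]"

lemma eval_rec_tri_root: "eval rec_tri_root [z] (tri_count z z)"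
  unfolding rec_tri_root_def by (auto intro!: eval_Comp2 eval_Proj_nth eval_rec_tri_count)

lemma eval_rec_fst: "eval rec_fst [z] (fst (prod_decode z))"
  unfolding rec_fst_def fst_prod_decode_eq
  by (rule eval_Comp2[OF eval_Proj_nth eval_Comp1[OF eval_rec_tri_root eval_rec_triangle]
        eval_rec_sub]) auto

lemma eval_rec_snd: "eval rec_snd [z] (snd (prod_decode z))"
  unfolding rec_snd_def snd_prod_decode_eq
  by (rule eval_Comp2[OF eval_rec_tri_root eval_rec_fst eval_rec_sub])

lemma eval_rec_pair: "eval rec_pair [a, b] (prod_encode (a, b))"
  unfolding rec_pair_def prod_encode_def case_prod_conv
  by (rule eval_Comp2[OF eval_Comp1[OF eval_Comp2[OF eval_Proj_nth eval_Proj_nth eval_rec_add]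
        eval_rec_triangle] eval_Proj_nth eval_rec_add]) auto

definition rec_pow2_count :: recf where
  "rec_pow2_count =
     Prec Z (Comp rec_add [Proj 1, Comp rec_le [Comp rec_pow2 [Comp S [Proj 0]], Comp S [Proj 2]]])"

lemma eval_rec_pow2_count: "eval rec_pow2_count [k, z] (pow2_count k z)"
  unfolding rec_pow2_count_def
  by (rule eval_Prec_iterate[where h = "\<lambda>k. pow2_count k z"]) (auto intro!: eval_Z
      eval_value_cong[OF eval_Comp2[OF _ eval_Comp2[OF eval_Comp1[OF eval_Comp1[OF _ eval_S]
        eval_rec_pow2] eval_Comp1[OF _ eval_S] eval_rec_le] eval_rec_add]] eval_Proj_nth)

definition rec_pow2_len :: recf where
  "rec_pow2_len = Comp rec_pow2 [Comp rec_pow2_count [Proj 0, Proj 0]]"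

lemma eval_rec_pow2_len: "eval rec_pow2_len [z] (2 ^ pow2_count z z)"
  unfolding rec_pow2_len_def
  by (auto intro!: eval_Comp1 eval_Comp2 eval_Proj_nth eval_rec_pow2_count eval_rec_pow2)

section \<open>Expressions compiled to partial recursive functions\<close>

datatype expr = EVar nat | EConst nat | EAdd expr expr | EMul expr expr | ESub expr expr
  | EIf expr expr expr | EMod2 expr | EDiv2 expr | EPair expr expr | EFst expr | ESnd expr
  | EPow2Len expr | ECall expr

text \<open>\<open>ECall\<close> calls a fixed partial recursive function, described by its values \<open>uo\<close>
  on its domain \<open>cv\<close>.\<close>

fun expr_val :: "(nat \<Rightarrow> nat) \<Rightarrow> expr \<Rightarrow> nat list \<Rightarrow> nat" where
  "expr_val uo (EVar i) xs = xs ! i"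
| "expr_val uo (EConst c) xs = c"
| "expr_val uo (EAdd a b) xs = expr_val uo a xs + expr_val uo b xs"
| "expr_val uo (EMul a b) xs = expr_val uo a xs * expr_val uo b xs"
| "expr_val uo (ESub a b) xs = expr_val uo a xs - expr_val uo b xs"
| "expr_val uo (EIf a b c) xs =
     (if expr_val uo a xs \<noteq> 0 then expr_val uo b xs else expr_val uo c xs)"
| "expr_val uo (EMod2 a) xs = expr_val uo a xs mod 2"
| "expr_val uo (EDiv2 a) xs = expr_val uo a xs div 2"
| "expr_val uo (EPair a b) xs = prod_encode (expr_val uo a xs, expr_val uo b xs)"
| "expr_val uo (EFst a) xs = fst (prod_decode (expr_val uo a xs))"
| "expr_val uo (ESnd a) xs = snd (prod_decode (expr_val uo a xs))"
| "expr_val uo (EPow2Len a) xs = 2 ^ pow2_count (expr_val uo a xs) (expr_val uo a xs)"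
| "expr_val uo (ECall a) xs = uo (expr_val uo a xs)"

fun expr_defined :: "(nat \<Rightarrow> bool) \<Rightarrow> (nat \<Rightarrow> nat) \<Rightarrow> expr \<Rightarrow> nat list \<Rightarrow> bool" where
  "expr_defined cv uo (EVar i) xs = (i < length xs)"
| "expr_defined cv uo (EConst c) xs = True"
| "expr_defined cv uo (EAdd a b) xs = (expr_defined cv uo a xs \<and> expr_defined cv uo b xs)"
| "expr_defined cv uo (EMul a b) xs = (expr_defined cv uo a xs \<and> expr_defined cv uo b xs)"
| "expr_defined cv uo (ESub a b) xs = (expr_defined cv uo a xs \<and> expr_defined cv uo b xs)"
| "expr_defined cv uo (EIf a b c) xs =
     (expr_defined cv uo a xs \<and> expr_defined cv uo b xs \<and> expr_defined cv uo c xs)"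
| "expr_defined cv uo (EMod2 a) xs = expr_defined cv uo a xs"
| "expr_defined cv uo (EDiv2 a) xs = expr_defined cv uo a xs"
| "expr_defined cv uo (EPair a b) xs = (expr_defined cv uo a xs \<and> expr_defined cv uo b xs)"
| "expr_defined cv uo (EFst a) xs = expr_defined cv uo a xs"
| "expr_defined cv uo (ESnd a) xs = expr_defined cv uo a xs"
| "expr_defined cv uo (EPow2Len a) xs = expr_defined cv uo a xs"
| "expr_defined cv uo (ECall a) xs = (expr_defined cv uo a xs \<and> cv (expr_val uo a xs))"

fun compile :: "recf \<Rightarrow> expr \<Rightarrow> recf" where
  "compile fU (EVar i) = Proj i"
| "compile fU (EConst c) = rec_const c"
| "compile fU (EAdd a b) = Comp rec_add [compile fU a, compile fU b]"
| "compile fU (EMul a b) = Comp rec_mul [compile fU a, compile fU b]"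
| "compile fU (ESub a b) = Comp rec_sub [compile fU a, compile fU b]"
| "compile fU (EIf a b c) = Comp rec_if [compile fU a, compile fU b, compile fU c]"
| "compile fU (EMod2 a) = Comp rec_mod2 [compile fU a]"
| "compile fU (EDiv2 a) = Comp rec_div2 [compile fU a]"
| "compile fU (EPair a b) = Comp rec_pair [compile fU a, compile fU b]"
| "compile fU (EFst a) = Comp rec_fst [compile fU a]"
| "compile fU (ESnd a) = Comp rec_snd [compile fU a]"
| "compile fU (EPow2Len a) = Comp rec_pow2_len [compile fU a]"
| "compile fU (ECall a) = Comp fU [compile fU a]"

lemma eval_compile:
  assumes fU: "\<And>z. cv z \<Longrightarrow> eval fU [z] (uo z)"
  shows "expr_defined cv uo e xs \<Longrightarrow> eval (compile fU e) xs (expr_val uo e xs)"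
proof (induction e)
  case (EIf a b c)
  then have "eval (Comp rec_if [compile fU a, compile fU b, compile fU c]) xs
      (if expr_val uo a xs \<noteq> 0 then expr_val uo b xs else expr_val uo c xs)"
    by (intro eval_Comp3[OF _ _ _ eval_rec_if]) auto
  then show ?case by simp
qed (auto intro: eval_Proj_nth eval_rec_const fU eval_Comp1 eval_Comp2
    eval_rec_add eval_rec_mul eval_rec_sub eval_rec_mod2 eval_rec_div2 eval_rec_pair
    eval_rec_fst eval_rec_snd eval_rec_pow2_len)

section \<open>A decoder for sorted lists of programs\<close>

definition prog_lead :: "bool list \<Rightarrow> nat" where
  "prog_lead p = of_bool (p ! 0) + 2 * of_bool (p ! 1)"

definition prog_key :: "bool list \<Rightarrow> nat" where
  "prog_key p = 4 * length p + prog_lead p"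

text \<open>Starting from key \<open>c\<close>, program \<open>p\<close> is announced by \<open>prog_key p - c\<close> zeros and a one;
  its length and its first two bits can be read off its key, so only its remaining bits
  follow, in reverse order.\<close>

fun encode_programs :: "nat \<Rightarrow> bool list list \<Rightarrow> bool list" where
  "encode_programs c [] = []"
| "encode_programs c (p # ps) =
     replicate (prog_key p - c) False @ True # rev (drop 2 p) @ encode_programs (prog_key p) ps"

lemma length_encode_programs:
  "sorted (map prog_key ps) \<Longrightarrow> \<forall>p\<in>set ps. 2 \<le> length p \<and> c \<le> prog_key p \<and> prog_key p \<le> M
   \<Longrightarrow> c \<le> M \<Longrightarrow> length (encode_programs c ps) + c \<le> M + (\<Sum>p\<leftarrow>ps. length p - 1)"
proof (induction ps arbitrary: c)
  case (Cons p ps)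
  then have "length (encode_programs (prog_key p) ps) + prog_key p
      \<le> M + (\<Sum>p\<leftarrow>ps. length p - 1)"
    by (intro Cons.IH) auto
  with Cons.prems show ?case by (simp; arith)
qed simp

text \<open>A state \<open>(r, c, k, q, a, s)\<close> of the decoder consists of the code \<open>r\<close> of the unread
  input, the current key \<open>c\<close>, the number \<open>k\<close> of program bits still to be read, the code \<open>q\<close>
  of the program bits read so far, the code \<open>a\<close> of the output, and \<open>s = 2 ^ length\<close> of the
  output. Each step consumes one input bit; \<open>r mod 2 \<noteq> 0\<close> means that this bit is \<open>False\<close>.\<close>

type_synonym dstate = "nat \<times> nat \<times> nat \<times> nat \<times> nat \<times> nat"

fun state_code :: "dstate \<Rightarrow> nat" where
  "state_code (r, c, k, q, a, s) =
     prod_encode (r, prod_encode (c, prod_encode (k, prod_encode (q, prod_encode (a, s)))))"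

text \<open>\<open>full_program (prog_key p) (enc (drop 2 p)) = enc p\<close>: the low two bits of the key
  restore the first two bits of \<open>p\<close>.\<close>

definition full_program :: "nat \<Rightarrow> nat \<Rightarrow> nat" where
  "full_program c q = 4 * q + 2 * (1 + c mod 4 div 2) + (1 + c mod 4 mod 2)"

fun next_prog :: "dstate \<Rightarrow> nat" where
  "next_prog (r, c, k, q, a, s) =
     (if r \<noteq> 0 then (if k \<noteq> 0 then 2 * q + (if r mod 2 \<noteq> 0 then 1 else 2) else 0) else q)"

fun call_arg :: "nat \<Rightarrow> dstate \<Rightarrow> nat" where
  "call_arg e (r, c, k, q, a, s) =
     (if r \<noteq> 0 \<and> k = 1 then full_program c (next_prog (r, c, k, q, a, s)) else e)"

fun step_state :: "nat \<Rightarrow> (nat \<Rightarrow> nat) \<Rightarrow> dstate \<Rightarrow> dstate" where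
  "step_state e uo (r, c, k, q, a, s) =
     (let y = uo (call_arg e (r, c, k, q, a, s)) in
      (if r \<noteq> 0 then (r - 1) div 2 else 0,
       if r \<noteq> 0 \<and> k = 0 \<and> r mod 2 \<noteq> 0 then Suc c else c,
       if r \<noteq> 0 then (if k \<noteq> 0 then k - 1 else if r mod 2 \<noteq> 0 then 0 else c div 2 div 2 - 2)
       else k,
       next_prog (r, c, k, q, a, s),
       a + s * y,
       s * 2 ^ pow2_count y y))"

definition arg_expr :: "nat \<Rightarrow> expr" where
  "arg_expr e =
    (let r = EFst (EVar 1); c = EFst (ESnd (EVar 1)); k = EFst (ESnd (ESnd (EVar 1)));
         q = EFst (ESnd (ESnd (ESnd (EVar 1))));
         q' = EAdd (EMul (EConst 2) q) (EIf (EMod2 r) (EConst 1) (EConst 2));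
         c4 = ESub c (EMul (EConst 4) (EDiv2 (EDiv2 c)));
         full = EAdd (EAdd (EMul (EConst 4) q') (EMul (EConst 2) (EAdd (EConst 1) (EDiv2 c4))))
                  (EAdd (EConst 1) (EMod2 c4))
     in EIf r (EIf k (EIf (ESub k (EConst 1)) (EConst e) full) (EConst e)) (EConst e))"

definition step_expr :: "nat \<Rightarrow> expr" where
  "step_expr e =
    (let r = EFst (EVar 1); c = EFst (ESnd (EVar 1)); k = EFst (ESnd (ESnd (EVar 1)));
         q = EFst (ESnd (ESnd (ESnd (EVar 1)))); a = EFst (ESnd (ESnd (ESnd (ESnd (EVar 1)))));
         s = ESnd (ESnd (ESnd (ESnd (ESnd (EVar 1))))); y = ECall (arg_expr e);
         r' = EIf r (EDiv2 (ESub r (EConst 1))) (EConst 0);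
         c' = EIf r (EIf k c (EIf (EMod2 r) (EAdd c (EConst 1)) c)) c;
         k' = EIf r (EIf k (ESub k (EConst 1))
                (EIf (EMod2 r) (EConst 0) (ESub (EDiv2 (EDiv2 c)) (EConst 2)))) k;
         q' = EIf r (EIf k (EAdd (EMul (EConst 2) q) (EIf (EMod2 r) (EConst 1) (EConst 2)))
                (EConst 0)) q
     in EPair r' (EPair c' (EPair k' (EPair q' (EPair (EAdd a (EMul s y)) (EMul s (EPow2Len y)))))))"

lemma mod4_eq: "(c::nat) - 4 * (c div 2 div 2) = c mod 4"
  by presburger

lemma expr_val_arg_expr: "expr_val uo (arg_expr e) [n, state_code st, x] = call_arg e st"
  by (cases st) (auto simp: arg_expr_def Let_def full_program_def mod4_eq)

lemma expr_defined_arg_expr: "expr_defined cv uo (arg_expr e) [n, z, x]"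
  by (simp add: arg_expr_def Let_def)

lemma expr_val_step_expr:
  "expr_val uo (step_expr e) [n, state_code st, x] = state_code (step_state e uo st)"
  using expr_val_arg_expr[of uo e n st x]
  by (cases st) (simp add: step_expr_def Let_def)

lemma expr_defined_step_expr:
  "cv (call_arg e st) \<Longrightarrow> expr_defined cv uo (step_expr e) [n, state_code st, x]"
  using expr_defined_arg_expr[of cv uo e n "state_code st" x] expr_val_arg_expr[of uo e n st x]
  by (simp add: step_expr_def Let_def)

definition init_expr :: expr where
  "init_expr = EPair (EVar 0)
     (EPair (EConst 0) (EPair (EConst 0) (EPair (EConst 0) (EPair (EConst 0) (EConst 1)))))"

definition out_expr :: expr where
  "out_expr = EFst (ESnd (ESnd (ESnd (ESnd (EVar 0)))))"

definition rec_run :: "recf \<Rightarrow> nat \<Rightarrow> recf" where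
  "rec_run fU e = Prec (compile fU init_expr) (compile fU (step_expr e))"

definition rec_decoder :: "recf \<Rightarrow> nat \<Rightarrow> recf" where
  "rec_decoder fU e = Comp (compile fU out_expr) [Comp (rec_run fU e) [Proj 0, Proj 0]]"

text \<open>\<open>fU\<close> computes the universal machine, and \<open>e\<close> encodes a program printing the empty string.
  The decoder calls the machine on \<open>e\<close> whenever no program has been completely read, which
  keeps every step defined and leaves the output unchanged.\<close>

locale decoder =
  fixes fU :: recf and uo :: "nat \<Rightarrow> nat" and cv :: "nat \<Rightarrow> bool" and e :: nat and x0 :: nat
  assumes eval_fU: "\<And>z. cv z \<Longrightarrow> eval fU [z] (uo z)"
    and cv_e: "cv e" and uo_e: "uo e = 0"
begin

definition reaches :: "nat \<Rightarrow> dstate \<Rightarrow> bool" where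
  "reaches n st \<longleftrightarrow> eval (rec_run fU e) [n, x0] (state_code st)"

lemma reaches_0: "reaches 0 (x0, 0, 0, 0, 0, 1)"
proof -
  have "eval (compile fU init_expr) [x0] (expr_val uo init_expr [x0])"
    by (rule eval_compile[OF eval_fU]) (auto simp: init_expr_def)
  then show ?thesis unfolding reaches_def rec_run_def
    by (intro eval_Prec0) (simp add: init_expr_def)
qed

lemma reaches_Suc:
  assumes "reaches n st" "cv (call_arg e st)" "step_state e uo st = st'"
  shows "reaches (Suc n) st'"
proof -
  have "eval (compile fU (step_expr e)) [n, state_code st, x0]
      (expr_val uo (step_expr e) [n, state_code st, x0])"
    using assms(2) by (intro eval_compile[OF eval_fU] expr_defined_step_expr)
  with assms show ?thesis
    unfolding reaches_def rec_run_def expr_val_step_expr by (auto intro: eval_PrecS)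
qed

lemma reaches_halted: "reaches n (0, c, k, q, a, s) \<Longrightarrow> reaches (n + m) (0, c, k, q, a, s)"
proof (induction m)
  case (Suc m)
  have "reaches (Suc (n + m)) (0, c, k, q, a, s)"
    using Suc.IH[OF Suc.prems] by (rule reaches_Suc) (simp_all add: uo_e cv_e)
  then show ?case by simp
qed simp

lemma reaches_zeros:
  "reaches n (enc (replicate m False @ rest), c, 0, q, a, s)
   \<Longrightarrow> \<exists>q'. reaches (n + m) (enc rest, c + m, 0, q', a, s)"
proof (induction m arbitrary: n c q)
  case (Suc m)
  from Suc.prems have "reaches (Suc n) (enc (replicate m False @ rest), Suc c, 0, 0, a, s)"
    by (rule reaches_Suc) (simp_all add: uo_e cv_e)
  from Suc.IH[OF this] show ?case by auto
qed auto

lemma reaches_bits: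
  "1 \<le> k \<Longrightarrow> reaches n (enc (ds @ rest), c, length ds + k, q, a, s)
   \<Longrightarrow> reaches (n + length ds) (enc rest, c, k, enc (rev ds @ dec q), a, s)"
proof (induction ds arbitrary: n q)
  case (Cons d ds)
  from Cons.prems(2) have "reaches (Suc n) (enc (ds @ rest), c, length ds + k, enc (d # dec q), a, s)"
    by (rule reaches_Suc) (use Cons.prems(1) in \<open>cases d; simp add: uo_e cv_e\<close>)+
  from Cons.IH[OF Cons.prems(1) this] show ?case by (simp del: enc.simps)
qed simp

lemma reaches_program:
  assumes "reaches n (enc (True # rev (drop 2 p) @ rest), prog_key p, 0, q, a, s)"
    and p: "3 \<le> length p" "cv (enc p)" "uo (enc p) = enc x"
  shows "reaches (n + length p - 1)
      (enc rest, prog_key p, 0, enc (drop 2 p), a + s * enc x, s * 2 ^ length x)"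
proof -
  obtain a1 a2 d ds where p_eq: "p = a1 # a2 # d # ds"
    using p(1) by (auto simp: numeral_3_eq_3 Suc_le_length_iff)
  let ?c = "prog_key p"
  have key_div: "?c div 2 div 2 - 2 = length ds + 1"
    by (auto simp: prog_key_def prog_lead_def p_eq)
  have "drop 2 p = d # ds" by (simp add: p_eq)
  with assms(1) have "reaches (Suc n) (enc (rev ds @ [d] @ rest), ?c, length (rev ds) + 1, 0, a, s)"
    by (auto intro!: reaches_Suc simp: uo_e cv_e key_div)
  from reaches_bits[OF _ this]
  have bits: "reaches (Suc n + length ds) (enc (d # rest), ?c, 1, enc ds, a, s)" by simp
  have full: "full_program ?c (enc (d # ds)) = enc p"
    by (cases a1; cases a2) (auto simp: full_program_def prog_key_def prog_lead_def p_eq)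
  from bits have "reaches (Suc (Suc n + length ds))
      (enc rest, ?c, 0, enc (d # ds), a + s * enc x, s * 2 ^ length x)"
    by (rule reaches_Suc) (use full p in \<open>cases d; simp add: pow2_count_enc\<close>)+
  then show ?thesis by (simp add: p_eq)
qed

lemma reaches_encode_programs:
  "list_all2 (\<lambda>p x. 3 \<le> length p \<and> cv (enc p) \<and> uo (enc p) = enc x) ps xs
   \<Longrightarrow> reaches n (enc (encode_programs c ps @ rest), c, 0, q, a, s)
   \<Longrightarrow> \<forall>p\<in>set ps. c \<le> prog_key p \<Longrightarrow> sorted (map prog_key ps)
   \<Longrightarrow> \<exists>c' q'. reaches (n + length (encode_programs c ps))
         (enc rest, c', 0, q', a + s * enc (concat xs), s * 2 ^ length (concat xs))"
proof (induction ps xs arbitrary: n c q a s rule: list_all2_induct)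
  case (Cons p ps x xs)
  let ?m = "prog_key p - c"
  from Cons.prems(1) reaches_zeros[of n ?m] obtain q' where
    "reaches (n + ?m) (enc (True # rev (drop 2 p) @ encode_programs (prog_key p) ps @ rest),
       prog_key p, 0, q', a, s)"
    using Cons.prems(2) by fastforce
  from reaches_program[OF this] Cons.hyps(1)
  have "reaches (n + ?m + length p - 1) (enc (encode_programs (prog_key p) ps @ rest),
      prog_key p, 0, enc (drop 2 p), a + s * enc x, s * 2 ^ length x)"
    by blast
  from Cons.IH[OF this] Cons.prems(3) obtain c' q'' where
    "reaches (n + ?m + length p - 1 + length (encode_programs (prog_key p) ps))
      (enc rest, c', 0, q'', (a + s * enc x) + (s * 2 ^ length x) * enc (concat xs),
       (s * 2 ^ length x) * 2 ^ length (concat xs))"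
    by auto
  moreover have "n + ?m + length p - 1 + length (encode_programs (prog_key p) ps)
      = n + length (encode_programs c (p # ps))"
    using Cons.hyps(1) by (simp; arith)
  ultimately show ?case
    by (auto simp: enc_append algebra_simps power_add)
qed fastforce

lemma eval_rec_decoder:
  assumes "list_all2 (\<lambda>p x. 3 \<le> length p \<and> cv (enc p) \<and> uo (enc p) = enc x) ps xs"
    and "sorted (map prog_key ps)" and x0: "x0 = enc (encode_programs 0 ps)"
  shows "eval (rec_decoder fU e) [x0] (enc (concat xs))"
proof -
  let ?b = "encode_programs 0 ps"
  from reaches_0 x0 have "reaches 0 (enc (?b @ []), 0, 0, 0, 0, 1)" by simp
  from reaches_encode_programs[OF assms(1) this] assms(2) obtain c q where
    "reaches (length ?b) (0, c, 0, q, enc (concat xs), 2 ^ length (concat xs))"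
    by auto
  let ?st = "(0, c, 0, q, enc (concat xs), 2 ^ length (concat xs))"
  note \<open>reaches (length ?b) ?st\<close>
  moreover have "length ?b + (x0 - length ?b) = x0"
    using length_le_enc[of ?b] x0 by simp
  ultimately have "reaches x0 ?st"
    by (metis reaches_halted)
  then have "eval (rec_run fU e) [x0, x0] (state_code ?st)"
    by (simp add: reaches_def)
  moreover have "eval (compile fU out_expr) [state_code ?st] (expr_val uo out_expr [state_code ?st])"
    by (rule eval_compile[OF eval_fU]) (auto simp: out_expr_def)
  ultimately show ?thesis unfolding rec_decoder_def
    by (intro eval_Comp1 eval_Comp2[OF eval_Proj_nth eval_Proj_nth]) (auto simp: out_expr_def)
qed

end

section \<open>Kolmogorov complexity\<close>

lemma universal_simulates_recf:
  assumes "universal U"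
  obtains q where "\<And>x v. eval f [enc x] v \<Longrightarrow> U (q @ x) = Some (dec v)"
proof -
  define F where
    "F x = (if \<exists>v. eval f [enc x] v then Some (dec (THE v. eval f [enc x] v)) else None)" for x
  have F_eq: "F x = Some (dec v)" if "eval f [enc x] v" for x v
  proof -
    have "(THE v. eval f [enc x] v) = v"
      using that by (blast intro: eval_deterministic)
    with that show ?thesis by (auto simp: F_def)
  qed
  have "F x = Some y \<longleftrightarrow> eval f [enc x] (enc y)" for x y
  proof
    assume F_x: "F x = Some y"
    then obtain v where v: "eval f [enc x] v"
      by (auto simp: F_def split: if_splits)
    have "y = dec v" using F_x F_eq[OF v] by simp
    with v show "eval f [enc x] (enc y)" by simp
  next
    assume "eval f [enc x] (enc y)"
    from F_eq[OF this] show "F x = Some y" by simp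
  qed
  then have "partial_computable F"
    unfolding partial_computable_def by blast
  with assms obtain q where q: "\<And>p. U (q @ p) = F p"
    unfolding universal_def by blast
  show thesis by (rule that[of q]) (simp add: q F_eq)
qed

lemma universal_identity_program:
  assumes "universal U"
  obtains q where "\<And>x. U (q @ x) = Some x"
proof -
  obtain q where q: "\<And>x v. eval (Proj 0) [enc x] v \<Longrightarrow> U (q @ x) = Some (dec v)"
    using universal_simulates_recf[OF assms] by blast
  have "U (q @ x) = Some x" for x
    using q[OF eval_Proj_nth[of 0 "[enc x]" "enc x"]] by simp
  then show thesis by (rule that)
qed

lemma KC_le: "U p = Some x \<Longrightarrow> KC U x \<le> length p"
  unfolding KC_def by (rule Least_le) blast

lemma KC_attained:
  assumes "universal U"
  shows "\<exists>p. length p = KC U x \<and> U p = Some x"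
proof -
  obtain q where "U (q @ x) = Some x"
    using universal_identity_program[OF assms] by blast
  then have "\<exists>k p. length p = k \<and> U p = Some x" by blast
  from LeastI_ex[OF this] show ?thesis unfolding KC_def .
qed

lemma KC_le_length_add:
  assumes "universal U"
  obtains c where "\<And>x. KC U x \<le> length x + c"
proof -
  obtain q where "\<And>x. U (q @ x) = Some x"
    using universal_identity_program[OF assms] by blast
  then have "KC U x \<le> length x + length q" for x
    using KC_le[of U "q @ x" x] by simp
  then show thesis by (rule that)
qed

lemma finite_KC_less:
  assumes "universal U"
  shows "finite {x. KC U x < k}"
proof (rule finite_subset)
  show "{x. KC U x < k} \<subseteq> (\<lambda>p. the (U p)) ` {p. set p \<subseteq> UNIV \<and> length p \<le> k}"
  proof
    fix x
    assume "x \<in> {x. KC U x < k}"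
    moreover obtain p where "length p = KC U x" "U p = Some x"
      using KC_attained[OF assms] by blast
    ultimately show "x \<in> (\<lambda>p. the (U p)) ` {p. set p \<subseteq> UNIV \<and> length p \<le> k}"
      by (intro image_eqI[of _ _ p]) auto
  qed
  show "finite ((\<lambda>p. the (U p)) ` {p. set p \<subseteq> UNIV \<and> length p \<le> k})"
    by (intro finite_imageI finite_lists_length_le) simp
qed

lemma KC_ge_if_long:
  assumes "universal U"
  obtains m where "\<And>x. m < length x \<Longrightarrow> k \<le> KC U x"
proof -
  have "finite (length ` {x. KC U x < k})"
    using finite_KC_less[OF assms] by simp
  then obtain m where "\<forall>l\<in>length ` {x. KC U x < k}. l \<le> m"
    using finite_nat_set_iff_bounded_le by blast
  then show thesis by (intro that[of m]) (auto simp: not_le[symmetric])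
qed

lemma universal_decodes_sorted_programs:
  assumes "universal U"
  obtains qD where "\<And>ps xs. list_all2 (\<lambda>p x. 3 \<le> length p \<and> U p = Some x) ps xs
      \<Longrightarrow> sorted (map prog_key ps) \<Longrightarrow> U (qD @ encode_programs 0 ps) = Some (concat xs)"
proof -
  from assms obtain fU where fU: "\<And>x y. U x = Some y \<longleftrightarrow> eval fU [enc x] (enc y)"
    by (auto simp: universal_def partial_computable_def)
  define cv where "cv z \<longleftrightarrow> U (dec z) \<noteq> None" for z
  define uo where "uo z = enc (the (U (dec z)))" for z
  have eval_fU: "eval fU [z] (uo z)" if "cv z" for z
  proof -
    from that obtain y where "U (dec z) = Some y" by (auto simp: cv_def)
    with fU[of "dec z" y] show ?thesis by (simp add: uo_def)
  qed
  obtain q0 where q0: "\<And>x v. eval Z [enc x] v \<Longrightarrow> U (q0 @ x) = Some (dec v)"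
    using universal_simulates_recf[OF assms] by blast
  have "U q0 = Some []"
    using q0[OF eval_Z[of "[enc []]"]] by simp
  then have decoder: "decoder fU uo cv (enc q0)"
    by unfold_locales (rule eval_fU, simp_all add: cv_def uo_def)
  obtain qD where qD: "\<And>x v. eval (rec_decoder fU (enc q0)) [enc x] v \<Longrightarrow> U (qD @ x) = Some (dec v)"
    using universal_simulates_recf[OF assms] by blast
  show thesis
  proof (rule that)
    fix ps xs
    assume progs: "list_all2 (\<lambda>p x. 3 \<le> length p \<and> U p = Some x) ps xs"
      and sorted: "sorted (map prog_key ps)"
    interpret decoder fU uo cv "enc q0" "enc (encode_programs 0 ps)" by (rule decoder)
    from progs have "list_all2 (\<lambda>p x. 3 \<le> length p \<and> cv (enc p) \<and> uo (enc p) = enc x) ps xs"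
      by (rule list_all2_mono) (simp add: cv_def uo_def)
    from eval_rec_decoder[OF this sorted refl]
    show "U (qD @ encode_programs 0 ps) = Some (concat xs)" by (simp add: qD)
  qed
qed

lemma KC_concat_sorted_programs:
  assumes "universal U"
  obtains c where "\<And>ps xs l. list_all2 (\<lambda>p x. 3 \<le> length p \<and> U p = Some x) ps xs
      \<Longrightarrow> \<forall>p\<in>set ps. length p \<le> l \<Longrightarrow> sorted (map prog_key ps)
      \<Longrightarrow> KC U (concat xs) + length ps \<le> (\<Sum>p\<leftarrow>ps. length p) + 4 * l + c"
proof -
  obtain qD where qD: "\<And>ps xs. list_all2 (\<lambda>p x. 3 \<le> length p \<and> U p = Some x) ps xs
      \<Longrightarrow> sorted (map prog_key ps) \<Longrightarrow> U (qD @ encode_programs 0 ps) = Some (concat xs)"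
    using universal_decodes_sorted_programs[OF assms] by blast
  show thesis
  proof (rule that[of "length qD + 3"])
    fix ps xs l
    assume progs: "list_all2 (\<lambda>p x. 3 \<le> length p \<and> U p = Some x) ps xs"
      and short: "\<forall>p\<in>set ps. length p \<le> l" and sorted: "sorted (map prog_key ps)"
    have long: "\<forall>p\<in>set ps. 3 \<le> length p"
      using progs by (induction ps xs rule: list_all2_induct) auto
    have "KC U (concat xs) \<le> length qD + length (encode_programs 0 ps)"
      using KC_le[of U, OF qD[OF progs sorted]] by simp
    moreover have "length (encode_programs 0 ps) + 0 \<le> 4 * l + 3 + (\<Sum>p\<leftarrow>ps. length p - 1)"
      using sorted long short
      by (intro length_encode_programs) (auto simp: prog_key_def prog_lead_def)
    moreover have "(\<Sum>p\<leftarrow>ps. length p - 1) + length ps = (\<Sum>p\<leftarrow>ps. length p)"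
      using long by (induction ps) auto
    ultimately show "KC U (concat xs) + length ps \<le> (\<Sum>p\<leftarrow>ps. length p) + 4 * l + (length qD + 3)"
      by linarith
  qed
qed

lemma KC_reordered_concat_le:
  assumes "universal U"
  obtains m c where "\<And>n xs. m < n \<Longrightarrow> \<forall>x\<in>set xs. length x = n
      \<Longrightarrow> \<exists>L. distinct L \<and> set L = {..<length xs} \<and>
        KC U (concat (map ((!) xs) L)) + length xs \<le> (\<Sum>i<length xs. KC U (xs ! i)) + 4 * n + c"
proof -
  obtain m where long: "\<And>x. m < length x \<Longrightarrow> 3 \<le> KC U x"
    using KC_ge_if_long[OF assms] by blast
  obtain c0 where short: "\<And>x. KC U x \<le> length x + c0"
    using KC_le_length_add[OF assms] by blast
  obtain c1 where concat_le: "\<And>ps xs l. list_all2 (\<lambda>p x. 3 \<le> length p \<and> U p = Some x) ps xs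
      \<Longrightarrow> \<forall>p\<in>set ps. length p \<le> l \<Longrightarrow> sorted (map prog_key ps)
      \<Longrightarrow> KC U (concat xs) + length ps \<le> (\<Sum>p\<leftarrow>ps. length p) + 4 * l + c1"
    using KC_concat_sorted_programs[OF assms] by blast
  show thesis
  proof (rule that[of m "4 * c0 + c1"])
    fix n and xs :: "bool list list"
    assume n: "m < n" and len: "\<forall>x\<in>set xs. length x = n"
    define t where "t = length xs"
    define prog where "prog i = (SOME p. length p = KC U (xs ! i) \<and> U p = Some (xs ! i))" for i
    have prog: "length (prog i) = KC U (xs ! i)" "U (prog i) = Some (xs ! i)" for i
      using someI_ex[OF KC_attained[OF assms]] unfolding prog_def by blast+
    have len_i: "length (xs ! i) = n" if "i < t" for i
      using len that by (simp add: t_def)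
    define L where "L = sort_key (prog_key \<circ> prog) [0..<t]"
    have L: "distinct L" "set L = {..<t}" "length L = t" "sorted (map prog_key (map prog L))"
      by (auto simp: L_def)
    have "list_all2 (\<lambda>p x. 3 \<le> length p \<and> U p = Some x) (map prog L) (map ((!) xs) L)"
    proof (rule list_all2_all_nthI)
      fix j
      assume j: "j < length (map prog L)"
      then have "L ! j < t" using L(2,3) nth_mem[of j L] by auto
      with j show "3 \<le> length (map prog L ! j) \<and> U (map prog L ! j) = Some (map ((!) xs) L ! j)"
        using long[of "xs ! (L ! j)"] len_i n by (simp add: prog)
    qed simp
    moreover have "\<forall>p\<in>set (map prog L). length p \<le> n + c0"
      using L(2) short len_i by (auto simp: prog)
    ultimately have "KC U (concat (map ((!) xs) L)) + t
        \<le> (\<Sum>i\<leftarrow>L. length (prog i)) + 4 * (n + c0) + c1"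
      using concat_le[OF _ _ L(4)] L(3) by (fastforce simp: o_def)
    also have "(\<Sum>i\<leftarrow>L. length (prog i)) = (\<Sum>i<t. KC U (xs ! i))"
      using L(1,2) by (simp add: sum_list_distinct_conv_sum_set prog)
    finally show "\<exists>L. distinct L \<and> set L = {..<length xs} \<and> KC U (concat (map ((!) xs) L))
        + length xs \<le> (\<Sum>i<length xs. KC U (xs ! i)) + 4 * n + (4 * c0 + c1)"
      using L(1,2) unfolding t_def by (intro exI[of _ L]) simp
  qed
qed

lemma mutually_independent_length_le:
  assumes "universal U"
  obtains m c where "\<And>n \<alpha> xs. m < n \<Longrightarrow> \<forall>x\<in>set xs. length x = n
      \<Longrightarrow> mutually_independent U \<alpha> xs \<Longrightarrow> int (length xs) \<le> \<alpha> + 4 * int n + int c"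
proof -
  obtain m c where reorder: "\<And>n xs. m < n \<Longrightarrow> \<forall>x\<in>set xs. length x = n
      \<Longrightarrow> \<exists>L. distinct L \<and> set L = {..<length xs} \<and>
        KC U (concat (map ((!) xs) L)) + length xs \<le> (\<Sum>i<length xs. KC U (xs ! i)) + 4 * n + c"
    using KC_reordered_concat_le[OF assms] by blast
  show thesis
  proof (rule that[of m c])
    fix n \<alpha> xs
    assume n: "m < n" and len: "\<forall>x\<in>set xs. length x = n" and ind: "mutually_independent U \<alpha> xs"
    define t where "t = length xs"
    from reorder[OF n len] obtain L where L: "distinct L" "set L = {..<t}"
      and "KC U (concat (map ((!) xs) L)) + t \<le> (\<Sum>i<t. KC U (xs ! i)) + 4 * n + c"
      unfolding t_def by blast
    then have "int (KC U (concat (map ((!) xs) L)) + t) \<le> int ((\<Sum>i<t. KC U (xs ! i)) + 4 * n + c)"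
      by (simp only: of_nat_le_iff)
    then have "int (KC U (concat (map ((!) xs) L))) + int t \<le> (\<Sum>i<t. int (KC U (xs ! i))) + 4 * int n + int c"
      by simp
    moreover have "(\<Sum>i<t. int (KC U (xs ! i))) - \<alpha> \<le> int (KC U (concat (map ((!) xs) L)))"
    proof -
      have "length L = t" using L distinct_card[of L] by simp
      then have "bij_betw ((!) L) {..<t} {..<t}"
        using bij_betw_nth[OF L(1)] L(2) by (simp add: lessThan_atLeast0)
      moreover have "map (\<lambda>i. xs ! (L ! i)) [0..<t] = map ((!) xs) L"
        using \<open>length L = t\<close> by (intro nth_equalityI) simp_all
      ultimately show ?thesis
        using ind unfolding mutually_independent_def t_def by auto
    qed
    ultimately show "int (length xs) \<le> \<alpha> + 4 * int n + int c"
      unfolding t_def by linarith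
  qed
qed

lemma add_le_mul_two_powr:
  assumes "0 \<le> a" "1 \<le> b"
  shows "real_of_int a + b \<le> b * 2 powr real_of_int a"
proof -
  obtain k where a: "a = int k" using assms(1) nonneg_int_cases by blast
  have "real k + b \<le> b * (1 + real k)"
    using mult_right_mono[OF assms(2), of "real k"] by (simp add: algebra_simps)
  also have "\<dots> \<le> b * 2 ^ k"
    using assms(2) Suc_leI[OF less_exp[of k]] by (intro mult_left_mono) (simp_all flip: of_nat_Suc)
  finally show ?thesis by (simp add: a powr_realpow)
qed

theorem theorem7:
  fixes U :: "bool list \<Rightarrow> bool list option"
  assumes "universal U"
  shows "\<exists>p :: real poly. \<exists>N. \<forall>n\<ge>N. \<forall>(\<alpha>::int) (xs :: bool list list).
     real_of_int \<alpha> > 7 * log 2 (real n) + 6 \<longrightarrow>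
     (\<forall>x\<in>set xs. length x = n) \<longrightarrow>
     mutually_independent U \<alpha> xs \<longrightarrow>
     real (length xs) \<le> poly p (real n) * 2 powr (real_of_int \<alpha>)"
proof -
  obtain m c where bound: "\<And>n \<alpha> xs. m < n \<Longrightarrow> \<forall>x\<in>set xs. length x = n
      \<Longrightarrow> mutually_independent U \<alpha> xs \<Longrightarrow> int (length xs) \<le> \<alpha> + 4 * int n + int c"
    using mutually_independent_length_le[OF assms] by blast
  show ?thesis
  proof (intro exI[of _ "[:real c, 4:]"] exI[of _ "Suc m"] allI impI)
    fix n \<alpha> xs
    assume n: "Suc m \<le> n" and \<alpha>: "real_of_int \<alpha> > 7 * log 2 (real n) + 6"
      and "\<forall>x\<in>set xs. length x = n" "mutually_independent U \<alpha> xs"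
    have "0 \<le> log 2 (real n)"
      using n by simp
    with \<alpha> have \<alpha>_nonneg: "0 \<le> \<alpha>"
      by linarith
    from bound n \<open>\<forall>x\<in>set xs. length x = n\<close> \<open>mutually_independent U \<alpha> xs\<close>
    have "real_of_int (int (length xs)) \<le> real_of_int (\<alpha> + 4 * int n + int c)"
      by (simp only: of_int_le_iff Suc_le_eq)
    then have "real (length xs) \<le> real_of_int \<alpha> + (4 * real n + real c)"
      by simp
    also have "\<dots> \<le> (4 * real n + real c) * 2 powr real_of_int \<alpha>"
      using \<alpha>_nonneg n by (intro add_le_mul_two_powr) auto
    finally show "real (length xs) \<le> poly [:real c, 4:] (real n) * 2 powr real_of_int \<alpha>"
      by (simp add: algebra_simps)
  qed
qed

end
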